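(* Let $(G,k)$ be an instance of PITVD, let $S\subseteq V(G)$ be such that $G-S$ is a simple (prop-int, tree)-graph, and let $V_2$ be the set of vertices of the connected components of $G-S$ that are trees. If there is a vertex $v\in S$ such that $G[\{v\}\cup V_2]$ contains a $v$-flower of order $4k+3$, then every solution of size at most $k$ for $(G,k)$ contains $v$, and $(G,k)$ is a yes-instance if and only if $(G-v,k-1)$ is a yes-instance.
   Context: PITVD: the input is an undirected multigraph $G$ (no self-loops) and an integer $k$; the question is whether there exists $X\subseteq V(G)$ with $|X|\le k$ (a solution) such that $G-X$ is a simple graph and every connected component of $G-X$ is a proper interval graph or a tree. A simple graph is a (prop-int, tree)-graph if each of its connected components is a proper interval graph or a tree. A cycle is a sequence $(v_1,\dots,v_\ell,v_1)$ with $\ell\ge2$, distinct $v_i$, consecutive vertices adjacent (for $\ell=2$ this means a double edge). A $v$-flower of order $\ell$ is a family of $\ell$ cycles each containing $v$ such that any two of them intersect only in $v$. *)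

theory Defs
  imports Main "HOL-Library.Disjoint_Sets" Complex_Main
begin

record 'a mgraph =
  verts :: "'a set"
  mult  :: "'a \<Rightarrow> 'a \<Rightarrow> nat"

definition multigraph :: "'a mgraph \<Rightarrow> bool" where
  "multigraph G \<longleftrightarrow> finite (verts G)
     \<and> (\<forall>u w. mult G u w = mult G w u)
     \<and> (\<forall>u. mult G u u = 0)
     \<and> (\<forall>u w. mult G u w > 0 \<longrightarrow> u \<in> verts G \<and> w \<in> verts G)"

definition adj :: "'a mgraph \<Rightarrow> 'a \<Rightarrow> 'a \<Rightarrow> bool" where
  "adj G u w \<longleftrightarrow> u \<in> verts G \<and> w \<in> verts G \<and> mult G u w > 0"

definition induced :: "'a mgraph \<Rightarrow> 'a set \<Rightarrow> 'a mgraph" where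
  "induced G A = \<lparr>verts = verts G \<inter> A,
     mult = (\<lambda>u w. if u \<in> A \<and> w \<in> A then mult G u w else 0)\<rparr>"

definition del_verts :: "'a mgraph \<Rightarrow> 'a set \<Rightarrow> 'a mgraph" where
  "del_verts G X = induced G (verts G - X)"

definition simple :: "'a mgraph \<Rightarrow> bool" where
  "simple G \<longleftrightarrow> (\<forall>u \<in> verts G. \<forall>w \<in> verts G. mult G u w \<le> 1)"

definition connected :: "'a mgraph \<Rightarrow> bool" where
  "connected G \<longleftrightarrow> verts G \<noteq> {} \<and>
     (\<forall>u \<in> verts G. \<forall>w \<in> verts G. (u, w) \<in> {(x, y). adj G x y}\<^sup>*)"

definition component :: "'a mgraph \<Rightarrow> 'a set \<Rightarrow> bool" where
  "component G C \<longleftrightarrow> C \<subseteq> verts G \<and> connected (induced G C)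
     \<and> (\<forall>u \<in> C. \<forall>w. adj G u w \<longrightarrow> w \<in> C)"

definition is_cycle :: "'a mgraph \<Rightarrow> 'a list \<Rightarrow> bool" where
  "is_cycle G cs \<longleftrightarrow> length cs \<ge> 2 \<and> distinct cs \<and> set cs \<subseteq> verts G \<and>
     (if length cs = 2 then mult G (cs ! 0) (cs ! 1) \<ge> 2
      else (\<forall>i < length cs. adj G (cs ! i) (cs ! ((i + 1) mod length cs))))"

definition is_tree :: "'a mgraph \<Rightarrow> bool" where
  "is_tree G \<longleftrightarrow> simple G \<and> connected G \<and> \<not> (\<exists>cs. is_cycle G cs)"

definition proper_interval :: "'a mgraph \<Rightarrow> bool" where
  "proper_interval G \<longleftrightarrow> simple G \<and>
     (\<exists>l r :: 'a \<Rightarrow> real.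
        (\<forall>u \<in> verts G. l u \<le> r u) \<and>
        (\<forall>u \<in> verts G. \<forall>w \<in> verts G. u \<noteq> w \<longrightarrow>
            (adj G u w \<longleftrightarrow> {l u..r u} \<inter> {l w..r w} \<noteq> {})) \<and>
        (\<forall>u \<in> verts G. \<forall>w \<in> verts G. \<not> ({l u..r u} \<subset> {l w..r w})))"

definition propint_tree :: "'a mgraph \<Rightarrow> bool" where
  "propint_tree G \<longleftrightarrow> simple G \<and>
     (\<forall>C. component G C \<longrightarrow> proper_interval (induced G C) \<or> is_tree (induced G C))"

definition solution :: "'a mgraph \<Rightarrow> int \<Rightarrow> 'a set \<Rightarrow> bool" where
  "solution G k X \<longleftrightarrow> X \<subseteq> verts G \<and> int (card X) \<le> k \<and> propint_tree (del_verts G X)"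

definition yes_instance :: "'a mgraph \<Rightarrow> int \<Rightarrow> bool" where
  "yes_instance G k \<longleftrightarrow> (\<exists>X. solution G k X)"

definition flower :: "'a mgraph \<Rightarrow> 'a \<Rightarrow> 'a list list \<Rightarrow> bool" where
  "flower G v F \<longleftrightarrow> (\<forall>c \<in> set F. is_cycle G c \<and> v \<in> set c) \<and>
     (\<forall>i < length F. \<forall>j < length F. i \<noteq> j \<longrightarrow> set (F ! i) \<inter> set (F ! j) = {v})"

end

theory Submission
  imports Defs
begin

(* If a solution X with |X| <= k missed v, at most k petals of the flower would meet X, so three
   petals survive in G - X.  They lie in the component of v in G - X, which thus contains a cycle
   and must be a proper interval graph.  Each surviving petal contributes two neighbours of v in V2;
   of these five neighbours, three lie on the same side of the interval of v and so form a triangle,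
   which is impossible inside the forest induced by V2 in G - S.  Once v lies in every solution,
   X |-> X - {v} matches the solutions of (G, k) with those of (G - v, k - 1). *)

lemma verts_induced [simp]: "verts (induced G A) = verts G \<inter> A"
  by (simp add: induced_def)

lemma mult_induced: "mult (induced G A) u w = (if u \<in> A \<and> w \<in> A then mult G u w else 0)"
  by (simp add: induced_def)

lemma adj_induced [simp]: "adj (induced G A) u w \<longleftrightarrow> adj G u w \<and> u \<in> A \<and> w \<in> A"
  by (auto simp: adj_def mult_induced)

lemma adj_del_verts: "adj (del_verts G X) u w \<longleftrightarrow> adj G u w \<and> u \<notin> X \<and> w \<notin> X"
  unfolding del_verts_def adj_induced by (auto simp: adj_def)

lemma symp_adj: "multigraph G \<Longrightarrow> symp (adj G)"
  by (auto simp: multigraph_def adj_def intro: sympI)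

lemma symp_adj_induced: "symp (adj G) \<Longrightarrow> symp (adj (induced G A))"
  by (simp add: symp_def)

lemma is_cycle_induced: "is_cycle (induced G A) c \<longleftrightarrow> is_cycle G c \<and> set c \<subseteq> A"
proof (cases "length c = 2")
  case True
  then have "c ! 0 \<in> set c" "c ! 1 \<in> set c" by auto
  with True show ?thesis by (auto simp: is_cycle_def mult_induced subset_iff)
next
  case False
  have "c ! ((i + 1) mod length c) \<in> set c" if "i < length c" for i
    using that by (intro nth_mem mod_less_divisor) auto
  with False show ?thesis by (auto simp: is_cycle_def subset_iff)
qed

lemma rtrancl_adj_induced_closed:
  assumes closed: "\<forall>u \<in> C. \<forall>w. adj H u w \<longrightarrow> w \<in> C"
    and path: "(x, y) \<in> {(u, w). adj H u w}\<^sup>*" and "x \<in> C"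
  shows "(x, y) \<in> {(u, w). adj (induced H C) u w}\<^sup>*"
proof -
  from path have "(x, y) \<in> {(u, w). adj (induced H C) u w}\<^sup>* \<and> y \<in> C"
  proof (induction rule: rtrancl_induct)
    case base
    then show ?case using \<open>x \<in> C\<close> by simp
  next
    case (step y z)
    then have "(y, z) \<in> {(u, w). adj (induced H C) u w}" "z \<in> C"
      using closed by auto
    with step.IH show ?case
      by (auto intro: rtrancl_into_rtrancl)
  qed
  then show ?thesis ..
qed

lemma ex_component_containing:
  assumes sym: "symp (adj H)" and v: "v \<in> verts H"
  obtains C where "component H C" "v \<in> C"
proof
  let ?R = "{(u, w). adj H u w}"
  define C where "C = ?R\<^sup>* `` {v}"
  show "v \<in> C" by (simp add: C_def)
  have closed: "\<forall>u \<in> C. \<forall>w. adj H u w \<longrightarrow> w \<in> C"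
    unfolding C_def by (blast intro: rtrancl_into_rtrancl)
  have "C \<subseteq> verts H"
  proof
    fix w assume "w \<in> C"
    then have "(v, w) \<in> ?R\<^sup>*" by (simp add: C_def)
    then show "w \<in> verts H"
      by (induction rule: rtrancl_induct) (auto simp: v adj_def)
  qed
  moreover have "(u, w) \<in> {(x, y). adj (induced H C) x y}\<^sup>*" if "u \<in> C" "w \<in> C" for u w
  proof -
    have "sym (?R\<^sup>*)"
      using sym by (intro sym_rtrancl) (auto simp: sym_def dest: sympD)
    moreover have "(v, u) \<in> ?R\<^sup>*" "(v, w) \<in> ?R\<^sup>*"
      using that by (simp_all add: C_def)
    ultimately have "(u, w) \<in> ?R\<^sup>*"
      by (meson rtrancl_trans symD)
    then show ?thesis
      using \<open>u \<in> C\<close> by (rule rtrancl_adj_induced_closed[OF closed])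
  qed
  ultimately show "component H C"
    using \<open>v \<in> C\<close> v closed unfolding component_def connected_def by (auto simp del: adj_induced)
qed

lemma is_cycle_adj_next:
  assumes "is_cycle G c" "3 \<le> length c" "i < length c"
  shows "adj G (c ! i) (c ! ((i + 1) mod length c))"
  using assms by (auto simp: is_cycle_def)

lemma simple_cycle_length:
  assumes "simple G" "is_cycle G c"
  shows "3 \<le> length c"
proof (rule ccontr)
  assume "\<not> 3 \<le> length c"
  with assms(2) have "length c = 2" "2 \<le> mult G (c ! 0) (c ! 1)" "set c \<subseteq> verts G"
    by (auto simp: is_cycle_def)
  moreover have "c ! 0 \<in> set c" "c ! 1 \<in> set c"
    using \<open>length c = 2\<close> by auto
  ultimately have "mult G (c ! 0) (c ! 1) \<le> 1"
    using assms(1) unfolding simple_def by blast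
  with \<open>2 \<le> mult G (c ! 0) (c ! 1)\<close> show False
    by simp
qed

lemma is_cycle_triangle:
  assumes "distinct [a, b, c]" "adj G a b" "adj G b c" "adj G c a"
  shows "is_cycle G [a, b, c]"
proof -
  have "adj G ([a, b, c] ! i) ([a, b, c] ! ((i + 1) mod 3))" if "i < 3" for i
  proof -
    from that have "i = 0 \<or> i = 1 \<or> i = 2" by auto
    with assms show ?thesis by auto
  qed
  with assms show ?thesis
    by (auto simp: is_cycle_def adj_def)
qed

lemma cycle_subset_component:
  assumes comp: "component D C" and cyc: "is_cycle D c" and len: "3 \<le> length c"
    and "x \<in> set c" "x \<in> C"
  shows "set c \<subseteq> C"
proof
  let ?n = "length c"
  obtain i0 where i0: "i0 < ?n" "c ! i0 = x"
    using \<open>x \<in> set c\<close> by (auto simp: in_set_conv_nth)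
  have along: "c ! ((i0 + j) mod ?n) \<in> C" for j
  proof (induction j)
    case 0
    then show ?case using i0 \<open>x \<in> C\<close> by simp
  next
    case (Suc j)
    have "(i0 + j) mod ?n < ?n"
      using len by (intro mod_less_divisor) linarith
    then have "adj D (c ! ((i0 + j) mod ?n)) (c ! ((i0 + Suc j) mod ?n))"
      using is_cycle_adj_next[OF cyc len] by (metis add_Suc_right mod_Suc_eq Suc_eq_plus1)
    with Suc.IH comp show ?case
      by (auto simp: component_def)
  qed
  fix y assume "y \<in> set c"
  then obtain j where "j < ?n" "y = c ! j"
    by (auto simp: in_set_conv_nth)
  moreover have "(i0 + (?n - i0 + j)) mod ?n = j"
    using i0 \<open>j < ?n\<close> by simp
  ultimately show "y \<in> C"
    using along[of "?n - i0 + j"] by simp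
qed

lemma cycle_two_neighbours:
  assumes sym: "symp (adj G)" and cyc: "is_cycle G c" and len: "3 \<le> length c"
    and "v \<in> set c"
  obtains a b where "a \<noteq> b" "{a, b} \<subseteq> set c - {v}" "adj G v a" "adj G v b"
proof -
  let ?n = "length c"
  obtain i where i: "i < ?n" "c ! i = v"
    using \<open>v \<in> set c\<close> by (auto simp: in_set_conv_nth)
  define p where "p = (if i = 0 then ?n - 1 else i - 1)"
  define s where "s = (i + 1) mod ?n"
  have p: "p < ?n" "(p + 1) mod ?n = i"
    using i len by (auto simp: p_def)
  have "i + 1 < ?n \<or> i + 1 = ?n"
    using i by linarith
  then have s: "s < ?n" "s \<noteq> i" "s \<noteq> p" "p \<noteq> i"
    using i len by (auto simp: s_def p_def)
  have "adj G v (c ! s)"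
    using is_cycle_adj_next[OF cyc len i(1)] i by (simp add: s_def)
  moreover have "adj G v (c ! p)"
    using is_cycle_adj_next[OF cyc len p(1)] p i sym by (simp add: symp_def)
  moreover have "c ! s \<noteq> c ! p" "c ! s \<noteq> v" "c ! p \<noteq> v"
    using s p i cyc by (auto simp: is_cycle_def nth_eq_iff_index_eq)
  moreover have "c ! s \<in> set c" "c ! p \<in> set c"
    using s p by simp_all
  ultimately show thesis
    using that[of "c ! s" "c ! p"] by blast
qed

lemma tree_part_triangle_free:
  assumes xyz: "{x, y, z} \<subseteq> \<Union>{C. component (del_verts G S) C \<and> is_tree (induced (del_verts G S) C)}"
    and "distinct [x, y, z]" "adj G x y" "adj G y z" "adj G z x"
  shows False
proof -
  let ?D = "del_verts G S"
  obtain C where C: "component ?D C" "is_tree (induced ?D C)" "x \<in> C"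
    using xyz by blast
  have "{x, y, z} \<subseteq> verts ?D"
    using xyz by (auto simp: component_def)
  then have "{x, y, z} \<inter> S = {}"
    by (auto simp: del_verts_def)
  with assms(2-) have "is_cycle ?D [x, y, z]"
    by (intro is_cycle_triangle) (auto simp: adj_del_verts)
  moreover have "set [x, y, z] \<subseteq> C"
    using cycle_subset_component[OF C(1) \<open>is_cycle ?D [x, y, z]\<close>, of x] C(3) by simp
  ultimately have "is_cycle (induced ?D C) [x, y, z]"
    by (simp add: is_cycle_induced)
  with C(2) show False
    by (auto simp: is_tree_def)
qed

lemma pigeonhole_bool:
  fixes P :: "'a \<Rightarrow> bool"
  assumes "2 * n < card A"
  obtains B where "B \<subseteq> A" "card B = Suc n" "\<forall>x \<in> B. \<forall>y \<in> B. P x = P y"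
proof -
  have "finite A"
    using assms card.infinite by force
  have "card {x \<in> A. P x} + card {x \<in> A. \<not> P x} = card A"
    using \<open>finite A\<close> by (subst card_Un_disjoint[symmetric]) (auto intro: arg_cong[where f = card])
  with assms consider "Suc n \<le> card {x \<in> A. P x}" | "Suc n \<le> card {x \<in> A. \<not> P x}"
    by linarith
  then show thesis
  proof cases
    case 1
    then obtain B where "B \<subseteq> {x \<in> A. P x}" "card B = Suc n"
      by (meson obtain_subset_with_card_n)
    with that show thesis by auto
  next
    case 2
    then obtain B where "B \<subseteq> {x \<in> A. \<not> P x}" "card B = Suc n"
      by (meson obtain_subset_with_card_n)
    with that show thesis by auto
  qed
qed

lemma overlapping_interval_contains_endpoint:
  fixes lv rv lx rx :: real
  assumes "{lv..rv} \<inter> {lx..rx} \<noteq> {}" and "\<not> {lx..rx} \<subset> {lv..rv}"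
  shows "(if lx \<le> lv then lv else rv) \<in> {lx..rx}"
proof -
  have t: "lv \<le> rx" "lx \<le> rv" "lx \<le> rx"
    using assms(1) by auto
  have "rv \<le> rx" if "lv < lx"
  proof (rule ccontr)
    assume "\<not> rv \<le> rx"
    with that t have "{lx..rx} \<subset> {lv..rv}"
      by auto
    with assms(2) show False ..
  qed
  with t show ?thesis
    by auto
qed

lemma proper_interval_neighbours_triangle:
  assumes "proper_interval H" and N: "N \<subseteq> {x. adj H v x} - {v}" and "5 \<le> card N"
  obtains x y z where "{x, y, z} \<subseteq> N" "distinct [x, y, z]"
    "adj H x y" "adj H y z" "adj H z x"
proof -
  obtain l r :: "'a \<Rightarrow> real" where
    adj_iff: "\<forall>u \<in> verts H. \<forall>w \<in> verts H. u \<noteq> w \<longrightarrow>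
        (adj H u w \<longleftrightarrow> {l u..r u} \<inter> {l w..r w} \<noteq> {})"
    and proper: "\<forall>u \<in> verts H. \<forall>w \<in> verts H. \<not> {l u..r u} \<subset> {l w..r w}"
    using assms(1) unfolding proper_interval_def by blast
  define side where "side x \<longleftrightarrow> l x \<le> l v" for x
  \<comment> \<open>neighbours on the left of v all contain l v, those on the right all contain r v\<close>
  have endpoint: "(if side x then l v else r v) \<in> {l x..r x}" if "x \<in> N" for x
  proof -
    have "adj H v x" "x \<noteq> v" and x: "x \<in> verts H" and v: "v \<in> verts H"
      using that N by (auto simp: adj_def)
    then have "{l v..r v} \<inter> {l x..r x} \<noteq> {}" "\<not> {l x..r x} \<subset> {l v..r v}"
      using adj_iff[rule_format, OF v x] proper[rule_format, OF x v] by auto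
    then show ?thesis
      unfolding side_def by (rule overlapping_interval_contains_endpoint)
  qed
  have same_side_adj: "adj H x y"
    if "x \<in> N" "y \<in> N" "x \<noteq> y" "side x = side y" for x y
  proof -
    have "{l x..r x} \<inter> {l y..r y} \<noteq> {}"
      using endpoint[OF that(1)] endpoint[OF that(2)] unfolding that(4) by blast
    moreover have "x \<in> verts H" "y \<in> verts H"
      using that N by (auto simp: adj_def)
    ultimately show ?thesis
      using adj_iff that(3) by blast
  qed
  have "2 * 2 < card N"
    using \<open>5 \<le> card N\<close> by simp
  then obtain B where B: "B \<subseteq> N" "card B = 3" "\<forall>x \<in> B. \<forall>y \<in> B. side x = side y"
    using pigeonhole_bool[of 2 N side] by (auto simp: numeral_3_eq_3)
  then obtain x y z where xyz: "B = {x, y, z}" "distinct [x, y, z]"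
    by (auto simp: card_3_iff)
  have "adj H u w" if "u \<in> B" "w \<in> B" "u \<noteq> w" for u w
    using same_side_adj that B by blast
  then show thesis
    using that[of x y z] B(1) xyz by auto
qed

lemma component_cycle_neighbours:
  assumes sym: "symp (adj D)" and "simple D" and comp: "component D C" and "v \<in> C"
    and cyc: "is_cycle D c" and "v \<in> set c"
  obtains a b where "is_cycle (induced D C) c" "a \<noteq> b" "{a, b} \<subseteq> set c - {v}"
    "adj (induced D C) v a" "adj (induced D C) v b"
proof -
  have len: "3 \<le> length c"
    using \<open>simple D\<close> cyc by (rule simple_cycle_length)
  then have "set c \<subseteq> C"
    using cycle_subset_component[OF comp cyc] \<open>v \<in> set c\<close> \<open>v \<in> C\<close> by blast
  with cyc have cycC: "is_cycle (induced D C) c"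
    by (simp add: is_cycle_induced)
  obtain a b where "a \<noteq> b" "{a, b} \<subseteq> set c - {v}" "adj (induced D C) v a" "adj (induced D C) v b"
    using cycle_two_neighbours[OF symp_adj_induced[OF sym] cycC len \<open>v \<in> set c\<close>] .
  with cycC show thesis
    by (rule that)
qed

lemma propint_tree_three_petals_triangle:
  assumes sym: "symp (adj D)" and pt: "propint_tree D"
    and petals: "\<forall>c \<in> {c1, c2, c3}. is_cycle D c \<and> v \<in> set c"
    and meet: "set c1 \<inter> set c2 = {v}" "set c1 \<inter> set c3 = {v}" "set c2 \<inter> set c3 = {v}"
  obtains x y z where "{x, y, z} \<subseteq> set c1 \<union> set c2 \<union> set c3 - {v}" "distinct [x, y, z]"
    "adj D x y" "adj D y z" "adj D z x"
proof -
  have "v \<in> verts D"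
    using petals by (auto simp: is_cycle_def)
  then obtain C where C: "component D C" "v \<in> C"
    using ex_component_containing[OF sym] by blast
  define H where "H = induced D C"
  have "simple D"
    using pt by (simp add: propint_tree_def)
  note nbrs = component_cycle_neighbours[OF sym \<open>simple D\<close> C, folded H_def]
  obtain a1 b1 where 1: "is_cycle H c1" "a1 \<noteq> b1" "{a1, b1} \<subseteq> set c1 - {v}" "adj H v a1" "adj H v b1"
    using nbrs petals by blast
  obtain a2 b2 where 2: "is_cycle H c2" "a2 \<noteq> b2" "{a2, b2} \<subseteq> set c2 - {v}" "adj H v a2" "adj H v b2"
    using nbrs petals by blast
  obtain a3 b3 where 3: "is_cycle H c3" "a3 \<noteq> b3" "{a3, b3} \<subseteq> set c3 - {v}" "adj H v a3" "adj H v b3"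
    using nbrs petals by blast
  have "proper_interval H"
    using pt C(1) 1(1) by (auto simp: propint_tree_def is_tree_def H_def)
  moreover have "{a1, b1, a2, b2, a3} \<subseteq> {x. adj H v x} - {v}"
    using 1 2 3 by auto
  moreover have "5 \<le> card {a1, b1, a2, b2, a3}"
    using 1 2 3 meet by (auto simp: card_insert_if)
  ultimately obtain x y z where "{x, y, z} \<subseteq> {a1, b1, a2, b2, a3}" "distinct [x, y, z]"
    "adj H x y" "adj H y z" "adj H z x"
    by (rule proper_interval_neighbours_triangle)
  with 1 2 3 show thesis
    using that[of x y z] by (auto simp: H_def)
qed

lemma card_flower_petals_avoiding:
  assumes fl: "flower G v F" and "v \<notin> X" "finite X"
  shows "length F \<le> card X + card {i. i < length F \<and> set (F ! i) \<inter> X = {}}"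
proof -
  define Hit where "Hit = {i. i < length F \<and> set (F ! i) \<inter> X \<noteq> {}}"
  define Avoid where "Avoid = {i. i < length F \<and> set (F ! i) \<inter> X = {}}"
  have "\<forall>i \<in> Hit. \<exists>x. x \<in> set (F ! i) \<inter> X"
    by (auto simp: Hit_def)
  then obtain f where f: "\<forall>i \<in> Hit. f i \<in> set (F ! i) \<inter> X"
    by (metis bchoice)
  have "inj_on f Hit"
  proof (rule inj_onI)
    fix i j assume ij: "i \<in> Hit" "j \<in> Hit" "f i = f j"
    then have "f i \<in> set (F ! i) \<inter> set (F ! j)" "f i \<noteq> v"
      using f \<open>v \<notin> X\<close> by auto
    then show "i = j"
      using fl ij(1,2) unfolding flower_def Hit_def by blast
  qed
  moreover have "f ` Hit \<subseteq> X"
    using f by auto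
  ultimately have "card Hit \<le> card X"
    using \<open>finite X\<close> by (rule card_inj_on_le)
  moreover have "{..<length F} = Hit \<union> Avoid" "Hit \<inter> Avoid = {}"
    by (auto simp: Hit_def Avoid_def)
  then have "length F = card Hit + card Avoid"
    by (metis card_Un_disjoint card_lessThan finite_Un finite_lessThan)
  ultimately show ?thesis
    unfolding Avoid_def by linarith
qed

lemma flower_centre_in_solution:
  assumes mg: "multigraph G" and vG: "v \<in> verts G"
    and V2: "V2 = \<Union>{C. component (del_verts G S) C \<and> is_tree (induced (del_verts G S) C)}"
    and fl: "flower (induced G ({v} \<union> V2)) v F"
    and XG: "X \<subseteq> verts G" and pt: "propint_tree (del_verts G X)"
    and len: "card X + 3 \<le> length F"
  shows "v \<in> X"
proof (rule ccontr)
  assume "v \<notin> X"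
  define D where "D = del_verts G X"
  define Good where "Good = {i. i < length F \<and> set (F ! i) \<inter> X = {}}"
  have "finite X"
    using mg XG by (auto simp: multigraph_def intro: finite_subset)
  then have "3 \<le> card Good"
    using card_flower_petals_avoiding[OF fl \<open>v \<notin> X\<close>] len unfolding Good_def by linarith
  then obtain I where "I \<subseteq> Good" "card I = 3"
    by (meson obtain_subset_with_card_n)
  then obtain i1 i2 i3 where idx: "{i1, i2, i3} \<subseteq> Good" "i1 \<noteq> i2" "i1 \<noteq> i3" "i2 \<noteq> i3"
    by (auto simp: card_3_iff)
  have petal: "is_cycle D (F ! i) \<and> v \<in> set (F ! i) \<and> set (F ! i) - {v} \<subseteq> V2" if "i \<in> Good" for i
  proof -
    have "is_cycle G (F ! i)" "set (F ! i) \<subseteq> {v} \<union> V2" "v \<in> set (F ! i)" "set (F ! i) \<inter> X = {}"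
      using fl that by (auto simp: flower_def is_cycle_induced Good_def)
    moreover from this have "set (F ! i) \<subseteq> verts G"
      by (simp add: is_cycle_def)
    ultimately show ?thesis
      by (auto simp: D_def del_verts_def is_cycle_induced)
  qed
  have meet: "set (F ! i) \<inter> set (F ! j) = {v}" if "i \<in> Good" "j \<in> Good" "i \<noteq> j" for i j
    using fl that by (auto simp: flower_def Good_def)
  have "symp (adj D)"
    using symp_adj_induced[OF symp_adj[OF mg]] by (simp add: D_def del_verts_def)
  moreover have "\<forall>c \<in> {F ! i1, F ! i2, F ! i3}. is_cycle D c \<and> v \<in> set c"
    using petal idx(1) by auto
  moreover have "set (F ! i1) \<inter> set (F ! i2) = {v}" "set (F ! i1) \<inter> set (F ! i3) = {v}"
      "set (F ! i2) \<inter> set (F ! i3) = {v}"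
    using meet idx by auto
  ultimately obtain x y z where xyz: "{x, y, z} \<subseteq> set (F ! i1) \<union> set (F ! i2) \<union> set (F ! i3) - {v}"
      "distinct [x, y, z]" "adj D x y" "adj D y z" "adj D z x"
    using propint_tree_three_petals_triangle pt[folded D_def] by metis
  moreover have "{x, y, z} \<subseteq> V2"
    using xyz(1) petal idx(1) by blast
  ultimately show False
    using tree_part_triangle_free[of x y z G S] V2 by (simp add: D_def adj_del_verts)
qed

lemma del_verts_del_verts: "del_verts (del_verts G A) B = del_verts G (A \<union> B)"
  by (auto simp: del_verts_def induced_def fun_eq_iff)

lemma solution_del_vertex_iff:
  assumes "finite X" "v \<in> X" "v \<in> verts G"
  shows "solution G k X \<longleftrightarrow> solution (del_verts G {v}) (k - 1) (X - {v})"
proof -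
  have "0 < card X"
    using assms(1,2) card_gt_0_iff by blast
  then have "int (card (X - {v})) = int (card X) - 1"
    using assms(1,2) by (simp add: of_nat_diff)
  moreover have "del_verts (del_verts G {v}) (X - {v}) = del_verts G X"
    using assms(2) by (simp add: del_verts_del_verts insert_absorb)
  moreover have "verts (del_verts G {v}) = verts G - {v}"
    by (auto simp: del_verts_def)
  ultimately show ?thesis
    using assms(3) by (auto simp: solution_def)
qed

lemma yes_instance_del_vertex_iff:
  assumes "finite (verts G)" "v \<in> verts G" and v_forced: "\<forall>X. solution G k X \<longrightarrow> v \<in> X"
  shows "yes_instance G k \<longleftrightarrow> yes_instance (del_verts G {v}) (k - 1)"
proof
  assume "yes_instance G k"
  then obtain X where X: "solution G k X"
    by (auto simp: yes_instance_def)
  moreover have "finite X"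
    using X assms(1) by (auto simp: solution_def intro: finite_subset)
  ultimately have "solution (del_verts G {v}) (k - 1) (X - {v})"
    using solution_del_vertex_iff[of X v G k] v_forced assms(2) by simp
  then show "yes_instance (del_verts G {v}) (k - 1)"
    by (auto simp: yes_instance_def)
next
  assume "yes_instance (del_verts G {v}) (k - 1)"
  then obtain Y where Y: "solution (del_verts G {v}) (k - 1) Y"
    by (auto simp: yes_instance_def)
  then have "Y \<subseteq> verts G - {v}"
    by (auto simp: solution_def del_verts_def)
  then have "finite (insert v Y)" "insert v Y - {v} = Y"
    using assms(1) by (auto intro: finite_subset)
  with Y have "solution G k (insert v Y)"
    using solution_del_vertex_iff[of "insert v Y" v G k] assms(2) by simp
  then show "yes_instance G k"
    by (auto simp: yes_instance_def)
qed

theorem lemma23: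
  fixes G :: "'a mgraph" and k :: int and S V2 :: "'a set" and v :: 'a and F :: "'a list list"
  assumes "multigraph G"
    and "S \<subseteq> verts G"
    and "propint_tree (del_verts G S)"
    and "V2 = \<Union>{C. component (del_verts G S) C \<and> is_tree (induced (del_verts G S) C)}"
    and "v \<in> S"
    and "flower (induced G ({v} \<union> V2)) v F"
    and "int (length F) = 4 * k + 3"
  shows "(\<forall>X. solution G k X \<longrightarrow> v \<in> X) \<and>
         (yes_instance G k \<longleftrightarrow> yes_instance (del_verts G {v}) (k - 1))"
proof -
  \<comment> \<open>only k + 3 petals are needed, and G - S need not be a (prop-int, tree)-graph\<close>
  have "finite (verts G)" and "v \<in> verts G"
    using assms(1,2,5) by (auto simp: multigraph_def)
  have forced: "\<forall>X. solution G k X \<longrightarrow> v \<in> X"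
  proof (intro allI impI)
    fix X assume "solution G k X"
    then have "X \<subseteq> verts G" "propint_tree (del_verts G X)" "int (card X) \<le> k"
      by (simp_all add: solution_def)
    moreover from \<open>int (card X) \<le> k\<close> assms(7) have "card X + 3 \<le> length F"
      by linarith
    ultimately show "v \<in> X"
      using flower_centre_in_solution[OF assms(1) \<open>v \<in> verts G\<close> assms(4,6)] by blast
  qed
  with yes_instance_del_vertex_iff[OF \<open>finite (verts G)\<close> \<open>v \<in> verts G\<close>] show ?thesis
    by blast
qed

end
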